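(* A norm $\|\cdot\|$ on $\mathbb{M}_n$ is an $M$-norm if and only if its dual norm $\|\cdot\|_*$ is an $L$-norm; and $\|\cdot\|$ is an $L$-norm if and only if $\|\cdot\|_*$ is an $M$-norm.
   Context: $\mathbb{M}_n$ is the algebra of complex $n\times n$ matrices with identity $I$. The dual norm is $\|Y\|_*=\sup\{|\mathrm{Tr}(Y^*X)| : X\in\mathbb{M}_n,\ \|X\|\le 1\}$. A norm $\|\cdot\|$ on $\mathbb{M}_n$ is an $M$-norm if $\left\|\sum_{i=1}^k C_i^*X_iC_i\right\|\le \max_{1\le i\le k}\|X_i\|$ for all $k$, all $X_i\in\mathbb{M}_n$ and all $C_i\in\mathbb{M}_n$ with $\sum_{i=1}^k C_i^*C_i=I$. It is an $L$-norm if $\sum_{i=1}^k\|C_iXC_i^*\|\le\|X\|$ for all $k$, all $X\in\mathbb{M}_n$ and all $C_i$ with $\sum_{i=1}^k C_i^*C_i=I$. *)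

theory Defs
  imports "HOL-Analysis.Analysis"
begin

type_synonym 'n cmat = "complex ^'n ^'n"

definition cadj :: "'n::finite cmat \<Rightarrow> 'n cmat" where
  "cadj A = (\<chi> i j. cnj (A $ j $ i))"

definition ctrace :: "'n::finite cmat \<Rightarrow> complex" where
  "ctrace A = (\<Sum>i\<in>UNIV. A $ i $ i)"

definition is_mat_norm :: "('n::finite cmat \<Rightarrow> real) \<Rightarrow> bool" where
  "is_mat_norm N \<longleftrightarrow>
     (\<forall>X. N X \<ge> 0) \<and> (\<forall>X. N X = 0 \<longleftrightarrow> X = 0) \<and>
     (\<forall>c X. N (\<chi> i j. c * X $ i $ j) = cmod c * N X) \<and>
     (\<forall>X Y. N (X + Y) \<le> N X + N Y)"

definition dual_norm :: "('n::finite cmat \<Rightarrow> real) \<Rightarrow> 'n cmat \<Rightarrow> real" where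
  "dual_norm N Y = (SUP X\<in>{X. N X \<le> 1}. cmod (ctrace (cadj Y ** X)))"

definition M_norm :: "('n::finite cmat \<Rightarrow> real) \<Rightarrow> bool" where
  "M_norm N \<longleftrightarrow>
     (\<forall>(k::nat) (X::nat \<Rightarrow> 'n cmat) (C::nat \<Rightarrow> 'n cmat).
        (\<Sum>i<k. cadj (C i) ** C i) = mat 1 \<longrightarrow>
        N (\<Sum>i<k. cadj (C i) ** X i ** C i) \<le> (MAX i\<in>{..<k}. N (X i)))"

definition L_norm :: "('n::finite cmat \<Rightarrow> real) \<Rightarrow> bool" where
  "L_norm N \<longleftrightarrow>
     (\<forall>(k::nat) (X::'n cmat) (C::nat \<Rightarrow> 'n cmat).
        (\<Sum>i<k. cadj (C i) ** C i) = mat 1 \<longrightarrow>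
        (\<Sum>i<k. N (C i ** X ** cadj (C i))) \<le> N X)"

end

theory Submission
  imports Defs
begin

text \<open>
  For a Kraus family \<open>\<Sum> C\<^sub>i\<^sup>* C\<^sub>i = I\<close>, the unital map \<open>X \<mapsto> \<Sum> C\<^sub>i\<^sup>* X C\<^sub>i\<close> and the
  trace-preserving map \<open>Y \<mapsto> \<Sum> C\<^sub>i Y C\<^sub>i\<^sup>*\<close> are adjoint for the trace pairing
  \<open>\<langle>Y, X\<rangle> = tr (Y\<^sup>* X)\<close>. Whenever \<open>P X = sup {Re \<langle>X, Y\<rangle> | Q Y \<le> 1}\<close> and
  \<open>|\<langle>X, Y\<rangle>| \<le> P X \<cdot> Q Y\<close>, this adjunction turns the M-property of \<open>Q\<close> into the
  L-property of \<open>P\<close> and the L-property of \<open>Q\<close> into the M-property of \<open>P\<close>. A norm and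
  its dual norm stand in this relation in both orders; that a norm is recovered from its
  dual norm is the Hahn-Banach theorem, obtained here from a separating hyperplane for
  a sublevel set of the norm.
\<close>

definition cmat_scale :: "complex \<Rightarrow> 'n::finite cmat \<Rightarrow> 'n cmat" where
  "cmat_scale c X = (\<chi> i j. c * X $ i $ j)"

definition frob_inner :: "'n::finite cmat \<Rightarrow> 'n cmat \<Rightarrow> complex" where
  "frob_inner Y X = ctrace (cadj Y ** X)"

lemma cadj_mult: "cadj (A ** B) = cadj B ** cadj (A::'n::finite cmat)"
  by (simp add: cadj_def matrix_matrix_mult_def vec_eq_iff mult.commute)

lemma cadj_cadj [simp]: "cadj (cadj (A::'n::finite cmat)) = A"
  by (simp add: cadj_def vec_eq_iff)

lemma ctrace_mult_commute: "ctrace (A ** B) = ctrace (B ** (A::'n::finite cmat))"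
  unfolding ctrace_def matrix_matrix_mult_def
  by (simp, subst sum.swap, simp add: mult.commute)

lemma frob_inner_sandwich:
  "frob_inner (C ** Y ** cadj C) X = frob_inner Y (cadj C ** X ** C)"
proof -
  have "frob_inner (C ** Y ** cadj C) X = ctrace (C ** (cadj Y ** cadj C ** X))"
    by (simp add: frob_inner_def cadj_mult matrix_mul_assoc)
  also have "\<dots> = ctrace (cadj Y ** cadj C ** X ** C)"
    by (subst ctrace_mult_commute) (simp add: matrix_mul_assoc)
  finally show ?thesis by (simp add: frob_inner_def matrix_mul_assoc)
qed

lemma frob_inner_expand: "frob_inner Y X = (\<Sum>i\<in>UNIV. \<Sum>j\<in>UNIV. cnj (Y$j$i) * X$j$i)"
  by (simp add: frob_inner_def ctrace_def cadj_def matrix_matrix_mult_def)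

lemma frob_inner_commute: "frob_inner X Y = cnj (frob_inner Y X)"
  by (simp add: frob_inner_expand mult.commute)

lemma frob_inner_zero [simp]: "frob_inner Y 0 = 0" "frob_inner 0 X = 0"
  by (simp_all add: frob_inner_expand)

lemma frob_inner_add_right: "frob_inner Y (X + Z) = frob_inner Y X + frob_inner Y Z"
  by (simp add: frob_inner_expand algebra_simps sum.distrib)

lemma frob_inner_sum_right: "frob_inner Y (\<Sum>i\<in>I. f i) = (\<Sum>i\<in>I. frob_inner Y (f i))"
  by (induction I rule: infinite_finite_induct) (simp_all add: frob_inner_add_right)

lemma frob_inner_add_left: "frob_inner (Y + Z) X = frob_inner Y X + frob_inner Z X"
  by (simp add: frob_inner_expand algebra_simps sum.distrib)

lemma frob_inner_sum_left: "frob_inner (\<Sum>i\<in>I. f i) X = (\<Sum>i\<in>I. frob_inner (f i) X)"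
  by (induction I rule: infinite_finite_induct) (simp_all add: frob_inner_add_left)

lemma frob_inner_scale_right: "frob_inner Y (cmat_scale c X) = c * frob_inner Y X"
  by (simp add: frob_inner_expand cmat_scale_def sum_distrib_left mult.left_commute)

lemma Re_frob_inner: "Re (frob_inner Y X) = inner Y X"
  unfolding frob_inner_expand by (subst sum.swap) (simp add: inner_vec_def inner_complex_def)

lemma cmat_scale_of_real: "cmat_scale (of_real r) X = r *\<^sub>R X"
  by (simp only: cmat_scale_def vec_eq_iff vec_lambda_beta vector_scaleR_component)
     (simp add: scaleR_conv_of_real)

lemma norm_frob_inner_le:
  "cmod (frob_inner Y X) \<le> real (CARD('n)) ^ 2 * norm Y * norm (X::'n::finite cmat)"
proof -
  have entry_le: "cmod (A$j$i) \<le> norm A" for A :: "'n cmat" and i j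
    using Finite_Cartesian_Product.norm_nth_le[of "A$j" i] Finite_Cartesian_Product.norm_nth_le[of A j]
    by linarith
  have "cmod (frob_inner Y X) \<le> (\<Sum>i\<in>UNIV. \<Sum>j\<in>UNIV. cmod (Y$j$i) * cmod (X$j$i))"
    unfolding frob_inner_expand
    by (rule order.trans[OF norm_sum sum_mono], rule order.trans[OF norm_sum]) (simp add: norm_mult)
  also have "\<dots> \<le> (\<Sum>i\<in>(UNIV::'n set). \<Sum>j\<in>(UNIV::'n set). norm Y * norm X)"
    by (intro sum_mono mult_mono entry_le) auto
  finally show ?thesis by (simp add: power2_eq_square)
qed

lemma unimodular_rotation: "\<exists>u. cmod u = 1 \<and> u * z = complex_of_real (cmod z)"
proof (cases "z = 0")
  case False
  then have "cnj (sgn z) * z = complex_of_real (cmod z)"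
    by (simp add: sgn_div_norm scaleR_conv_of_real field_simps complex_norm_square[symmetric]
        power2_eq_square)
  with False show ?thesis by (intro exI[of _ "cnj (sgn z)"]) (simp add: norm_sgn)
qed (intro exI[of _ 1], simp)

lemma convex_sublevel:
  assumes "convex_on UNIV f" shows "convex {x. f x \<le> r}"
proof (rule convexI)
  fix x y :: 'a and u v :: real
  assume xy: "x \<in> {x. f x \<le> r}" "y \<in> {x. f x \<le> r}" and uv: "0 \<le> u" "0 \<le> v" "u + v = 1"
  have "f (u *\<^sub>R x + v *\<^sub>R y) \<le> u * f x + v * f y"
    using convex_onD[OF assms, of v x y] uv by (simp add: eq_diff_eq[symmetric])
  also have "\<dots> \<le> u * r + v * r"
    using xy uv by (intro add_mono mult_left_mono) auto
  also have "\<dots> = r" using uv by (simp flip: distrib_right)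
  finally show "u *\<^sub>R x + v *\<^sub>R y \<in> {x. f x \<le> r}" by simp
qed

lemma sum_eq_mat_1_imp_pos:
  assumes "(\<Sum>i<(k::nat). f i) = (mat 1 :: 'n::finite cmat)" shows "0 < k"
proof (rule ccontr)
  assume "\<not> 0 < k"
  then have "k = 0" by simp
  with assms have "(mat 1 :: 'n cmat) = 0" by simp
  then have "(mat 1 :: 'n cmat) $ i $ i = 0" for i by simp
  then show False by (simp add: mat_def)
qed

locale norming_pair =
  fixes P Q :: "'n::finite cmat \<Rightarrow> real"
  assumes P_nonneg: "0 \<le> P X"
    and Q_nonneg: "0 \<le> Q Y"
    and norm_frob_inner_le_mult: "cmod (frob_inner X Y) \<le> P X * Q Y"
    and norming: "0 < e \<Longrightarrow> \<exists>Y. Q Y \<le> 1 \<and> P X - e < Re (frob_inner X Y)"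
begin

lemma Re_frob_inner_le_mult: "Re (frob_inner X Y) \<le> P X * Q Y"
  using complex_Re_le_cmod norm_frob_inner_le_mult by (rule order.trans)

lemma L_norm_if_M_norm_dual:
  assumes "M_norm Q" shows "L_norm P"
  unfolding L_norm_def
proof (intro allI impI)
  fix k :: nat and X :: "'n cmat" and C :: "nat \<Rightarrow> 'n cmat"
  assume Kraus: "(\<Sum>i<k. cadj (C i) ** C i) = mat 1"
  have k: "0 < k" using Kraus by (rule sum_eq_mat_1_imp_pos)
  show "(\<Sum>i<k. P (C i ** X ** cadj (C i))) \<le> P X"
  proof (rule field_le_epsilon)
    fix e :: real assume "0 < e"
    with k have "\<forall>i. \<exists>Y. Q Y \<le> 1 \<and>
        P (C i ** X ** cadj (C i)) - e / k < Re (frob_inner (C i ** X ** cadj (C i)) Y)"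
      by (simp add: norming)
    then obtain Y where Y: "\<And>i. Q (Y i) \<le> 1"
      "\<And>i. P (C i ** X ** cadj (C i)) - e / k < Re (frob_inner (C i ** X ** cadj (C i)) (Y i))"
      by metis
    have "(\<Sum>i<k. P (C i ** X ** cadj (C i)))
        \<le> (\<Sum>i<k. Re (frob_inner (C i ** X ** cadj (C i)) (Y i)) + e / k)"
      using Y(2) by (intro sum_mono) (metis diff_less_eq less_imp_le)
    also have "\<dots> = Re (frob_inner X (\<Sum>i<k. cadj (C i) ** Y i ** C i)) + e"
      using k by (simp add: sum.distrib frob_inner_sandwich frob_inner_sum_right)
    also have "\<dots> \<le> P X * Q (\<Sum>i<k. cadj (C i) ** Y i ** C i) + e"
      using Re_frob_inner_le_mult by simp
    also have "\<dots> \<le> P X + e"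
    proof -
      have "Q (\<Sum>i<k. cadj (C i) ** Y i ** C i) \<le> (MAX i\<in>{..<k}. Q (Y i))"
        using assms Kraus unfolding M_norm_def by blast
      also have "\<dots> \<le> 1" using k Y(1) by (subst Max_le_iff) auto
      finally show ?thesis using P_nonneg[of X] by (simp add: mult_left_le)
    qed
    finally show "(\<Sum>i<k. P (C i ** X ** cadj (C i))) \<le> P X + e" .
  qed
qed

lemma M_norm_if_L_norm_dual:
  assumes "L_norm Q" shows "M_norm P"
  unfolding M_norm_def
proof (intro allI impI)
  fix k :: nat and X :: "nat \<Rightarrow> 'n cmat" and C :: "nat \<Rightarrow> 'n cmat"
  assume Kraus: "(\<Sum>i<k. cadj (C i) ** C i) = mat 1"
  have k: "0 < k" using Kraus by (rule sum_eq_mat_1_imp_pos)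
  define m where "m = (MAX i\<in>{..<k}. P (X i))"
  have m: "P (X i) \<le> m" if "i < k" for i
    unfolding m_def using that by (intro Max_ge) auto
  have m_nonneg: "0 \<le> m" using m[OF k] P_nonneg[of "X 0"] by linarith
  show "P (\<Sum>i<k. cadj (C i) ** X i ** C i) \<le> m"
  proof (rule field_le_epsilon)
    fix e :: real assume "0 < e"
    then obtain Y where Y: "Q Y \<le> 1"
      "P (\<Sum>i<k. cadj (C i) ** X i ** C i) - e
        < Re (frob_inner (\<Sum>i<k. cadj (C i) ** X i ** C i) Y)"
      using norming by blast
    have "Re (frob_inner (\<Sum>i<k. cadj (C i) ** X i ** C i) Y)
        = Re (\<Sum>i<k. frob_inner (X i) (C i ** Y ** cadj (C i)))"
      using frob_inner_sandwich[of "cadj (C _)"] by (simp add: frob_inner_sum_left)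
    also have "\<dots> \<le> (\<Sum>i<k. P (X i) * Q (C i ** Y ** cadj (C i)))"
      unfolding Re_sum by (intro sum_mono Re_frob_inner_le_mult)
    also have "\<dots> \<le> m * (\<Sum>i<k. Q (C i ** Y ** cadj (C i)))"
      unfolding sum_distrib_left using m Q_nonneg by (intro sum_mono mult_right_mono) auto
    also have "\<dots> \<le> m * Q Y"
      using assms Kraus m_nonneg unfolding L_norm_def by (blast intro: mult_left_mono)
    also have "\<dots> \<le> m" using Y(1) m_nonneg by (simp add: mult_left_le)
    finally show "P (\<Sum>i<k. cadj (C i) ** X i ** C i) \<le> m + e" using Y(2) by linarith
  qed
qed

end

locale mat_norm =
  fixes N :: "'n::finite cmat \<Rightarrow> real"
  assumes is_mat_norm: "is_mat_norm N"
begin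

lemma nonneg: "0 \<le> N X"
  using is_mat_norm by (simp add: is_mat_norm_def)

lemma eq_0_iff: "N X = 0 \<longleftrightarrow> X = 0"
  using is_mat_norm by (simp add: is_mat_norm_def)

lemma zero [simp]: "N 0 = 0"
  by (simp add: eq_0_iff)

lemma scale: "N (cmat_scale c X) = cmod c * N X"
  using is_mat_norm by (simp add: is_mat_norm_def cmat_scale_def)

lemma triangle: "N (X + Y) \<le> N X + N Y"
  using is_mat_norm by (simp add: is_mat_norm_def)

lemma scaleR: "N (r *\<^sub>R X) = \<bar>r\<bar> * N X"
  using scale[of "of_real r" X] by (simp add: cmat_scale_of_real)

lemma convex: "convex_on UNIV N"
proof (rule convex_onI)
  fix t :: real and X Y :: "'n cmat"
  assume "0 < t" "t < 1"
  then show "N ((1 - t) *\<^sub>R X + t *\<^sub>R Y) \<le> (1 - t) * N X + t * N Y"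
    using triangle[of "(1 - t) *\<^sub>R X" "t *\<^sub>R Y"] by (simp add: scaleR)
qed simp

lemma continuous: "continuous_on UNIV N"
  by (rule convex_on_continuous[OF open_UNIV convex])

lemma ex_norm_lower_bound: "\<exists>c>0. \<forall>X. c * norm X \<le> N X"
proof -
  have "compact (sphere (0::'n cmat) 1)" "sphere (0::'n cmat) 1 \<noteq> {}"
    using vector_choose_size[of 1] by auto
  then obtain X0 where X0: "X0 \<in> sphere 0 1" "\<And>Y. Y \<in> sphere 0 1 \<Longrightarrow> N X0 \<le> N Y"
    using continuous_attains_inf[of "sphere 0 1" N] continuous_on_subset[OF continuous] by blast
  then have "0 < N X0"
    using eq_0_iff nonneg by (metis order_less_le mem_sphere_0 zero_neq_one norm_zero)
  moreover have "N X0 * norm X \<le> N X" for X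
  proof (cases "X = 0")
    case False
    then have "N X0 \<le> N ((1 / norm X) *\<^sub>R X)" by (intro X0(2)) simp
    then show ?thesis using False by (simp add: scaleR field_simps)
  qed (simp add: nonneg)
  ultimately show ?thesis by blast
qed

lemma dual_norm_eq: "dual_norm N Y = (SUP X\<in>{X. N X \<le> 1}. cmod (frob_inner Y X))"
  by (simp add: dual_norm_def frob_inner_def)

lemma unit_ball_nonempty: "{X. N X \<le> 1} \<noteq> {}"
proof -
  have "0 \<in> {X. N X \<le> 1}" by simp
  then show ?thesis by blast
qed

lemma bdd_above_dual: "bdd_above ((\<lambda>X. cmod (frob_inner Y X)) ` {X. N X \<le> 1})"
proof -
  obtain c where c: "0 < c" "\<And>X. c * norm X \<le> N X" using ex_norm_lower_bound by blast
  have "cmod (frob_inner Y X) \<le> real (CARD('n)) ^ 2 * norm Y * (1 / c)" if "N X \<le> 1" for X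
  proof -
    have "norm X \<le> 1 / c" using c(2)[of X] that c(1) by (simp add: field_simps)
    then show ?thesis using norm_frob_inner_le[of Y X]
      by (meson mult_left_mono order.trans mult_nonneg_nonneg norm_ge_zero zero_le_power of_nat_0_le_iff)
  qed
  then show ?thesis by (intro bdd_aboveI) auto
qed

lemma dual_norm_upper: "N X \<le> 1 \<Longrightarrow> cmod (frob_inner Y X) \<le> dual_norm N Y"
  unfolding dual_norm_eq by (rule cSUP_upper[OF _ bdd_above_dual]) simp

lemma dual_norm_least:
  "(\<And>X. N X \<le> 1 \<Longrightarrow> cmod (frob_inner Y X) \<le> m) \<Longrightarrow> dual_norm N Y \<le> m"
  unfolding dual_norm_eq by (rule cSUP_least[OF unit_ball_nonempty]) auto

lemma dual_norm_nonneg: "0 \<le> dual_norm N Y"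
  using dual_norm_upper[of 0 Y] by simp

lemma norm_frob_inner_le_dual: "cmod (frob_inner Y X) \<le> dual_norm N Y * N X"
proof (cases "X = 0")
  case False
  then have "0 < N X" using eq_0_iff nonneg by (metis order_less_le)
  moreover have "cmod (frob_inner Y (cmat_scale (of_real (1 / N X)) X)) \<le> dual_norm N Y"
    using \<open>0 < N X\<close> by (intro dual_norm_upper) (simp add: scale norm_divide)
  ultimately show ?thesis by (simp add: frob_inner_scale_right norm_mult norm_divide field_simps)
qed (simp add: dual_norm_nonneg nonneg)

lemma dual_norm_norming:
  assumes "0 < e" shows "\<exists>X. N X \<le> 1 \<and> dual_norm N Y - e < Re (frob_inner Y X)"
proof -
  obtain X where X: "N X \<le> 1" "dual_norm N Y - e < cmod (frob_inner Y X)"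
    using assms less_cSUP_iff[OF unit_ball_nonempty bdd_above_dual, of "dual_norm N Y - e" Y]
    unfolding dual_norm_eq by auto
  obtain u where u: "cmod u = 1" "u * frob_inner Y X = of_real (cmod (frob_inner Y X))"
    using unimodular_rotation by blast
  have "N (cmat_scale u X) \<le> 1" using X u by (simp add: scale)
  moreover have "Re (frob_inner Y (cmat_scale u X)) = cmod (frob_inner Y X)"
    using u by (simp add: frob_inner_scale_right)
  ultimately show ?thesis using X by auto
qed

lemma ex_dual_functional:
  assumes r: "0 < r" "r < N X"
  shows "\<exists>Y. dual_norm N Y \<le> 1 \<and> r < Re (frob_inner Y X)"
proof -
  define S where "S = {X. N X \<le> r}"
  have "convex S" unfolding S_def by (rule convex_sublevel[OF convex])
  moreover have "closed S"
    unfolding S_def by (rule closed_Collect_le[OF continuous continuous_on_const])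
  moreover have "X \<notin> S" using r by (simp add: S_def)
  ultimately obtain a b where ab: "inner a X < b" "\<And>x. x \<in> S \<Longrightarrow> b < inner a x"
    by (rule separating_hyperplane_closed_point[elim_format]) blast+
  have b: "b < 0" using ab(2)[of 0] r by (simp add: S_def)
  define Y where "Y = (r / b) *\<^sub>R a"
  have Re_Y: "Re (frob_inner Y x) = inner a (r *\<^sub>R x) / b" for x
    by (simp add: Re_frob_inner Y_def)
  have "dual_norm N Y \<le> 1"
  proof (rule dual_norm_least)
    fix x assume x: "N x \<le> 1"
    obtain u where u: "cmod u = 1" "u * frob_inner Y x = of_real (cmod (frob_inner Y x))"
      using unimodular_rotation by blast
    have "r *\<^sub>R cmat_scale u x \<in> S" using x u r by (simp add: S_def scaleR scale)
    then have "b < inner a (r *\<^sub>R cmat_scale u x)" by (rule ab(2))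
    then have "Re (frob_inner Y (cmat_scale u x)) < 1"
      unfolding Re_Y using b by (simp add: neg_divide_less_eq)
    moreover have "Re (frob_inner Y (cmat_scale u x)) = cmod (frob_inner Y x)"
      using u by (simp add: frob_inner_scale_right)
    ultimately show "cmod (frob_inner Y x) \<le> 1" by simp
  qed
  moreover have "r < Re (frob_inner Y X)"
    unfolding Re_Y using ab(1) b r by (simp add: neg_less_divide_eq)
  ultimately show ?thesis by blast
qed

lemma norming_by_dual:
  assumes "0 < e" shows "\<exists>Y. dual_norm N Y \<le> 1 \<and> N X - e < Re (frob_inner Y X)"
proof (cases "N X < e")
  case True
  then show ?thesis by (intro exI[of _ 0]) (simp add: dual_norm_least)
next
  case False
  with assms obtain Y where "dual_norm N Y \<le> 1" "N X - e / 2 < Re (frob_inner Y X)"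
    using ex_dual_functional[of "N X - e / 2" X] by auto
  with assms show ?thesis by (intro exI[of _ Y]) auto
qed

sublocale dual: norming_pair "dual_norm N" N
  by unfold_locales (auto simp: dual_norm_nonneg nonneg norm_frob_inner_le_dual dual_norm_norming)

sublocale primal: norming_pair N "dual_norm N"
proof unfold_locales
  fix X Y :: "'n cmat" and e :: real
  show "cmod (frob_inner X Y) \<le> N X * dual_norm N Y"
    using norm_frob_inner_le_dual[of Y X] by (simp add: frob_inner_commute[of X] mult.commute)
  assume "0 < e"
  then show "\<exists>Y. dual_norm N Y \<le> 1 \<and> N X - e < Re (frob_inner X Y)"
    using norming_by_dual[of e X] by (simp add: frob_inner_commute[of X])
qed (simp_all add: nonneg dual_norm_nonneg)

end

theorem lemma2p6:
  fixes N :: "'n::finite cmat \<Rightarrow> real"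
  assumes "is_mat_norm N"
  shows "(M_norm N \<longleftrightarrow> L_norm (dual_norm N)) \<and> (L_norm N \<longleftrightarrow> M_norm (dual_norm N))"
proof -
  interpret mat_norm N by (rule mat_norm.intro[OF assms])
  show ?thesis
    using dual.L_norm_if_M_norm_dual dual.M_norm_if_L_norm_dual
      primal.L_norm_if_M_norm_dual primal.M_norm_if_L_norm_dual by blast
qed

end
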